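(* Let $P$ be the poset on ground set $\{x_1,x_2,x_3,x_4,y,z\}$ whose strict comparabilities are exactly $x_1<x_2<x_3<x_4$ (together with those implied by transitivity: $x_1<x_3$, $x_1<x_4$, $x_2<x_4$), $x_1<z$, $x_2<z$, and $y<x_4$; all other pairs of distinct elements are incomparable. Then $P$ is not a unit OC interval order, but $P$ has a unit mixed interval representation, for instance $x_1\mapsto[0,1]$, $x_2\mapsto(1,2)$, $y\mapsto[1,2]$, $x_3\mapsto[2,3)$, $z\mapsto[2,3]$, $x_4\mapsto[3,4]$.
   Context: A finite poset is a unit OC interval order if each element $x$ can be assigned a real interval $I_x$ of length $1$ which is either open $(a,a+1)$ or closed $[a,a+1]$, such that for distinct $x,y$, $x<y$ if and only if $I_x$ and $I_y$ are disjoint and every point of $I_x$ is less than every point of $I_y$. A unit mixed interval representation is defined in the same way except that each $I_x$ may be any of $[a,a+1]$, $(a,a+1)$, $(a,a+1]$, $[a,a+1)$. *)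

theory Defs
  imports Complex_Main
begin

definition unit_OC_interval :: "real set \<Rightarrow> bool" where
  "unit_OC_interval I \<longleftrightarrow> (\<exists>a. I = {a<..<a+1} \<or> I = {a..a+1})"

definition unit_mixed_interval :: "real set \<Rightarrow> bool" where
  "unit_mixed_interval I \<longleftrightarrow>
     (\<exists>a. I = {a..a+1} \<or> I = {a<..<a+1} \<or> I = {a<..a+1} \<or> I = {a..<a+1})"

definition interval_before :: "real set \<Rightarrow> real set \<Rightarrow> bool" where
  "interval_before I J \<longleftrightarrow> I \<inter> J = {} \<and> (\<forall>p\<in>I. \<forall>q\<in>J. p < q)"

definition interval_rep ::
  "(real set \<Rightarrow> bool) \<Rightarrow> ('a \<Rightarrow> 'a \<Rightarrow> bool) \<Rightarrow> ('a \<Rightarrow> real set) \<Rightarrow> bool" where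
  "interval_rep K lt f \<longleftrightarrow>
     (\<forall>x. K (f x)) \<and> (\<forall>x y. x \<noteq> y \<longrightarrow> (lt x y \<longleftrightarrow> interval_before (f x) (f y)))"

definition unit_OC_interval_order :: "('a \<Rightarrow> 'a \<Rightarrow> bool) \<Rightarrow> bool" where
  "unit_OC_interval_order lt \<longleftrightarrow> (\<exists>f. interval_rep unit_OC_interval lt f)"

definition unit_mixed_interval_order :: "('a \<Rightarrow> 'a \<Rightarrow> bool) \<Rightarrow> bool" where
  "unit_mixed_interval_order lt \<longleftrightarrow> (\<exists>f. interval_rep unit_mixed_interval lt f)"

datatype elem = X1 | X2 | X3 | X4 | Y | Z

definition P_less :: "elem \<Rightarrow> elem \<Rightarrow> bool" where
  "P_less u v \<longleftrightarrow> (u, v) \<in> {(X1,X2),(X1,X3),(X1,X4),(X2,X3),(X2,X4),(X3,X4),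
                               (X1,Z),(X2,Z),(Y,X4)}"

fun P_rep :: "elem \<Rightarrow> real set" where
  "P_rep X1 = {0..1}"
| "P_rep X2 = {1<..<2}"
| "P_rep Y = {1..2}"
| "P_rep X3 = {2..<3}"
| "P_rep Z = {2..3}"
| "P_rep X4 = {3..4}"

end

theory Submission
  imports Defs
begin

text \<open>
  In a unit OC representation put \<open>I\<^sub>v = (a\<^sub>v, a\<^sub>v+1)\<close> or \<open>[a\<^sub>v, a\<^sub>v+1]\<close>. Then \<open>u < v\<close> forces
  \<open>a\<^sub>u + 1 \<le> a\<^sub>v\<close>, with equality only if one of the two intervals is open, while
  incomparability forces \<open>|a\<^sub>u - a\<^sub>v| \<le> 1\<close>, with equality only if both are closed.
  From \<open>x\<^sub>1 < x\<^sub>2 < x\<^sub>3\<close> and \<open>y\<close> being incomparable to \<open>x\<^sub>1\<close> and \<open>x\<^sub>3\<close> we get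
  \<open>a\<^sub>x\<^sub>3 = a\<^sub>y + 1\<close> with \<open>I\<^sub>x\<^sub>3\<close> closed; from \<open>z\<close> being incomparable to \<open>y\<close> and \<open>x\<^sub>4\<close> we get
  \<open>a\<^sub>x\<^sub>4 \<le> a\<^sub>z + 1 \<le> a\<^sub>y + 2 = a\<^sub>x\<^sub>3 + 1\<close>, so all are equalities and \<open>I\<^sub>x\<^sub>4\<close> is closed.
  But then the two closed intervals of \<open>x\<^sub>3 < x\<^sub>4\<close> touch, a contradiction.
\<close>

definition oc_interval :: "real \<Rightarrow> bool \<Rightarrow> real set" where
  "oc_interval a is_open = (if is_open then {a<..<a+1} else {a..a+1})"

lemma unit_OC_interval_iff: "unit_OC_interval I \<longleftrightarrow> (\<exists>a is_open. I = oc_interval a is_open)"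
  unfolding unit_OC_interval_def oc_interval_def by (metis (full_types))

lemma interval_before_oc_interval_iff:
  "interval_before (oc_interval a s) (oc_interval b t) \<longleftrightarrow> a + 1 < b \<or> (a + 1 = b \<and> (s \<or> t))"
proof
  assume "a + 1 < b \<or> (a + 1 = b \<and> (s \<or> t))"
  then show "interval_before (oc_interval a s) (oc_interval b t)"
    by (cases s; cases t) (auto simp: interval_before_def oc_interval_def)
next
  assume before: "interval_before (oc_interval a s) (oc_interval b t)"
  have "a + 1 \<le> b"
  proof (rule ccontr)
    assume "\<not> a + 1 \<le> b"
    define e where "e = min (a + 1 - b) 1 / 2"
    have "a + 1 - e \<in> oc_interval a s" "b + e \<in> oc_interval b t" "b + e \<le> a + 1 - e"
      using \<open>\<not> a + 1 \<le> b\<close> by (auto simp: oc_interval_def e_def)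
    with before show False by (fastforce simp: interval_before_def)
  qed
  moreover have "s \<or> t" if "a + 1 = b"
  proof (rule ccontr)
    assume "\<not> (s \<or> t)"
    then have "b \<in> oc_interval a s \<inter> oc_interval b t"
      using that by (auto simp: oc_interval_def)
    with before show False by (auto simp: interval_before_def)
  qed
  ultimately show "a + 1 < b \<or> (a + 1 = b \<and> (s \<or> t))" by auto
qed

lemma not_unit_OC_interval_order_P: "\<not> unit_OC_interval_order P_less"
proof
  assume "unit_OC_interval_order P_less"
  then obtain f where f: "interval_rep unit_OC_interval P_less f"
    unfolding unit_OC_interval_order_def by blast
  then obtain a t where f_eq: "\<And>v. f v = oc_interval (a v) (t v)"
    unfolding interval_rep_def unit_OC_interval_iff by metis
  have less: "P_less u v \<longleftrightarrow> a u + 1 < a v \<or> (a u + 1 = a v \<and> (t u \<or> t v))"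
    if "u \<noteq> v" for u v
    using f that unfolding interval_rep_def by (simp add: f_eq interval_before_oc_interval_iff)
  have "a X1 + 2 \<le> a X3" "a Y \<le> a X1 + 1" "a X3 \<le> a Y + 1"
    using less[of X1 X2] less[of X2 X3] less[of X1 Y] less[of Y X3] by (auto simp: P_less_def)
  then have x3: "a X3 = a Y + 1" "\<not> t X3"
    using less[of Y X3] by (auto simp: P_less_def)
  have "a Z \<le> a Y + 1" "a X4 \<le> a Z + 1" "a X3 + 1 \<le> a X4"
    using less[of Y Z] less[of Z X4] less[of X3 X4] by (auto simp: P_less_def)
  then have x4: "a X4 = a X3 + 1" "\<not> t X4"
    using x3 less[of Z X4] by (auto simp: P_less_def)
  show False
    using x3 x4 less[of X3 X4] by (simp add: P_less_def)
qed

lemma interval_rep_P_rep: "interval_rep unit_mixed_interval P_less P_rep"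
  unfolding interval_rep_def
proof (intro conjI allI impI)
  show "unit_mixed_interval (P_rep v)" for v
    unfolding unit_mixed_interval_def
    by (cases v) (auto intro: exI[of _ 0] exI[of _ 1] exI[of _ 2] exI[of _ 3])
  show "P_less u v \<longleftrightarrow> interval_before (P_rep u) (P_rep v)" if "u \<noteq> v" for u v
  proof
    assume "P_less u v"
    then show "interval_before (P_rep u) (P_rep v)"
      by (cases u; cases v) (auto simp: P_less_def interval_before_def)
  next
    assume "interval_before (P_rep u) (P_rep v)"
    \<comment> \<open>the sample points 1, 3/2, 2, 3 already witness every failure of \<open>interval_before\<close>\<close>
    then have "\<forall>p\<in>{1, 3/2, 2, 3}. \<forall>q\<in>{1, 3/2, 2, 3}. p \<in> P_rep u \<longrightarrow> q \<in> P_rep v \<longrightarrow> p < q"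
      by (auto simp: interval_before_def)
    then show "P_less u v"
      using that by (cases u; cases v) (simp_all add: P_less_def)
  qed
qed

theorem mainTheorem5:
  shows "\<not> unit_OC_interval_order P_less \<and> unit_mixed_interval_order P_less
         \<and> interval_rep unit_mixed_interval P_less P_rep"
  using not_unit_OC_interval_order_P interval_rep_P_rep
  unfolding unit_mixed_interval_order_def by blast

end
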